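(* For integers $N\ge 0$ and $i\ge 0$, the number of reversed partial ternary paths of length $3N+2i$ ending at level $i$ equals $$\sum_{0\le k\le i/2}\binom{i-k}{k}\left[\binom{3N+2i+1}{N+k}-3\binom{3N+2i}{N+k-1}\right],$$ with the convention $\binom{a}{b}=0$ for $b<0$.
   Context: A reversed partial ternary path of length $n$ is a lattice path $(0,c_0),\dots,(n,c_n)$ with $c_0=0$, each step being either $(1,2)$ or $(1,-1)$, never going below the $x$-axis; it ends at level $c_n$. Equivalently, these are final segments of ternary paths (steps $(1,1)$ and $(1,-2)$, staying weakly above the $x$-axis, ending on the $x$-axis) read from right to left. *)

theory Defs
  imports Main
begin

text \<open>A step is encoded as a boolean: True = step (1,2), False = step (1,-1).\<close>

definition step_val :: "bool \<Rightarrow> int" where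
  "step_val s = (if s then 2 else -1)"

definition level :: "bool list \<Rightarrow> int" where
  "level ss = (\<Sum>s\<leftarrow>ss. step_val s)"

definition rev_partial_ternary :: "bool list \<Rightarrow> bool" where
  "rev_partial_ternary ss = (\<forall>j \<le> length ss. level (take j ss) \<ge> 0)"

definition rpt_paths :: "nat \<Rightarrow> int \<Rightarrow> bool list set" where
  "rpt_paths n c = {ss. length ss = n \<and> rev_partial_ternary ss \<and> level ss = c}"

definition binom :: "nat \<Rightarrow> int \<Rightarrow> int" where
  "binom a b = (if b < 0 then 0 else int (a choose nat b))"

end

theory Submission
  imports Defs
begin

text \<open>Classifying by the last step, the number F(n,c) = card (rpt_paths n c) of reversed
  partial ternary paths of length n ending at level c satisfies F(n+1,c) = F(n,c-2) + F(n,c+1),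
  with F(n,c) = 0 for c < 0. The number R(n,h) = paths_to_zero n h of (2,-1)-paths of length n
  that start at level h, stay weakly above the axis and end on it satisfies the dual recursion
  R(n+1,h) = R(n,h-1) + R(n,h+2), from which a ballot-type closed form
  R(n,h) = binom n d - 2 binom n (d-1), n = h + 3d, follows by induction.
  The Fibonacci-weighted combination of the R(n, 2c-3k) with weights binom (c-k) k obeys the
  recursion of F in n (the Pascal rule for these weights converts one recursion into the
  other) and agrees with F for n = 0, so it equals F; the closed form and one more Pascal step
  give the theorem.\<close>

fun paths_to_zero :: "nat \<Rightarrow> int \<Rightarrow> int" where
  "paths_to_zero 0 h = (if h = 0 then 1 else 0)"
| "paths_to_zero (Suc n) h = (if h < 0 then 0 else paths_to_zero n (h-1) + paths_to_zero n (h+2))"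

lemma paths_to_zero_neg: "h < 0 \<Longrightarrow> paths_to_zero n h = 0"
  by (cases n) auto

lemma paths_to_zero_Suc:
  "h \<ge> 0 \<Longrightarrow> paths_to_zero (Suc n) h = paths_to_zero n (h-1) + paths_to_zero n (h+2)"
  by simp

lemma binom_Suc: "binom (Suc n) d = binom n d + binom n (d-1)"
proof (cases "d \<le> 0")
  case True
  then show ?thesis by (auto simp: binom_def)
next
  case False
  then have "nat d = Suc (nat (d-1))" by simp
  then show ?thesis using False by (simp add: binom_def)
qed

lemma binom_eq_twice_binom_pred:
  assumes "int n + 1 = 3*d"
  shows "binom n d = 2 * binom n (d-1)"
proof -
  have "d \<ge> 1" using assms by linarith
  then obtain e where d: "d = int e + 1"
    by (metis add.commute nat_int_add zle_iff_zadd)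
  have n: "n = 3*e + 2" using assms d by linarith
  have "Suc e * (n choose Suc e) = (n - e) * (n choose e)"
    by (metis binomial_absorb_comp binomial_absorption)
  also have "n - e = Suc e * 2" using n by simp
  finally have "Suc e * (n choose Suc e) = Suc e * (2 * (n choose e))"
    by (simp only: mult.assoc)
  then have "n choose Suc e = 2 * (n choose e)"
    using mult_left_cancel[of "Suc e"] by blast
  then show ?thesis using d by (simp add: binom_def nat_add_distrib)
qed

text \<open>In the induction step at h = 0 the term paths_to_zero n (-1) vanishes;
  binom_eq_twice_binom_pred says that its closed form vanishes as well.\<close>

lemma paths_to_zero_closed_form:
  "h \<ge> 0 \<Longrightarrow> int n = h + 3*d \<Longrightarrow> paths_to_zero n h = binom n d - 2 * binom n (d-1)"
proof (induction n arbitrary: h d)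
  case 0
  then show ?case by (cases "h = 0") (auto simp: binom_def)
next
  case (Suc n)
  have up: "paths_to_zero n (h+2) = binom n (d-1) - 2 * binom n (d-1-1)"
    using Suc by (intro Suc.IH) auto
  have down: "paths_to_zero n (h-1) = binom n d - 2 * binom n (d-1)"
  proof (cases "h = 0")
    case True
    then show ?thesis
      using Suc.prems binom_eq_twice_binom_pred[of n d] by (simp add: paths_to_zero_neg)
  next
    case False
    then show ?thesis using Suc by (intro Suc.IH) auto
  qed
  show ?case
    using Suc.prems up down binom_Suc[of n d] binom_Suc[of n "d-1"] by simp
qed

text \<open>fib_paths n c s is the combination of the paths_to_zero n (2c - 3k + s) with weights
  binom (c-k) k (lemma fib_paths_eq_sum_atMost); the recursion in c builds in the Pascal rule
  for the weights, and the shift s is what makes the recursion in n provable by fun-induction.\<close>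

fun fib_paths :: "nat \<Rightarrow> nat \<Rightarrow> int \<Rightarrow> int" where
  "fib_paths n 0 s = paths_to_zero n s"
| "fib_paths n (Suc 0) s = paths_to_zero n (2+s)"
| "fib_paths n (Suc (Suc c)) s = fib_paths n (Suc c) (s+2) + fib_paths n c (s+1)"

lemma fib_paths_Suc:
  "s \<ge> 0 \<Longrightarrow> fib_paths (Suc n) c s = fib_paths n c (s-1) + fib_paths n c (s+2)"
proof (induction n c s rule: fib_paths.induct)
  case (1 n s)
  then show ?case by (simp del: paths_to_zero.simps add: paths_to_zero_Suc)
next
  case (2 n s)
  then show ?case by (simp del: paths_to_zero.simps add: paths_to_zero_Suc algebra_simps)
next
  case (3 n c s)
  have "fib_paths (Suc n) (Suc c) (s+2) = fib_paths n (Suc c) (s+1) + fib_paths n (Suc c) (s+4)"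
    using "3.IH"(1) "3.prems" by (simp add: algebra_simps)
  moreover have "fib_paths (Suc n) c (s+1) = fib_paths n c s + fib_paths n c (s+3)"
    using "3.IH"(2) "3.prems" by (simp add: algebra_simps)
  moreover have "fib_paths n (Suc (Suc c)) (s-1) = fib_paths n (Suc c) (s+1) + fib_paths n c s"
    by (simp add: add.commute)
  moreover have "fib_paths n (Suc (Suc c)) (s+2) = fib_paths n (Suc c) (s+4) + fib_paths n c (s+3)"
    by (simp add: add.commute add.left_commute)
  ultimately show ?case by simp
qed

lemma fib_paths_Suc_zero:
  "fib_paths (Suc n) c 0 = fib_paths n (Suc c) 0 + (if c \<ge> 2 then fib_paths n (c-2) 0 else 0)"
proof -
  have "fib_paths n c (-1) =
      (if c = 0 then 0 else fib_paths n (c-1) 1) + (if c \<ge> 2 then fib_paths n (c-2) 0 else 0)"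
  proof (cases c)
    case (Suc c')
    then show ?thesis by (cases c') auto
  qed (simp add: paths_to_zero_neg)
  moreover have "fib_paths n (Suc c) 0 = fib_paths n c 2 + (if c = 0 then 0 else fib_paths n (c-1) 1)"
    by (cases c) auto
  ultimately show ?thesis using fib_paths_Suc[of 0 n c] by simp
qed

lemma sum_choose_diff_Suc_Suc:
  fixes X :: "nat \<Rightarrow> int"
  shows "(\<Sum>k\<le>Suc (Suc c). int ((Suc (Suc c) - k) choose k) * X k) =
     (\<Sum>k\<le>Suc c. int ((Suc c - k) choose k) * X k) + (\<Sum>k\<le>c. int ((c - k) choose k) * X (Suc k))"
proof -
  define f where "f k = (if k = 0 then 0 else int ((Suc c - k) choose (k - 1)) * X k)" for k
  have pascal: "int ((Suc (Suc c) - k) choose k) * X k = int ((Suc c - k) choose k) * X k + f k" for k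
  proof (cases k)
    case (Suc j)
    have "(Suc c - j) choose Suc j = ((c - j) choose Suc j) + ((c - j) choose j)"
      by (cases "j \<le> c") (simp_all add: Suc_diff_le)
    then show ?thesis using Suc by (simp add: f_def algebra_simps)
  qed (simp add: f_def)
  have "(\<Sum>k\<le>Suc (Suc c). f k) = f 0 + (\<Sum>k\<le>Suc c. f (Suc k))"
    by (rule sum.atMost_Suc_shift)
  also have "\<dots> = (\<Sum>k\<le>Suc c. int ((c - k) choose k) * X (Suc k))"
    by (simp add: f_def)
  also have "\<dots> = (\<Sum>k\<le>c. int ((c - k) choose k) * X (Suc k))"
    by simp
  finally have "(\<Sum>k\<le>Suc (Suc c). f k) = (\<Sum>k\<le>c. int ((c - k) choose k) * X (Suc k))" .
  moreover have "(\<Sum>k\<le>Suc (Suc c). int ((Suc c - k) choose k) * X k) =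
      (\<Sum>k\<le>Suc c. int ((Suc c - k) choose k) * X k)"
    by simp
  ultimately show ?thesis by (simp only: pascal sum.distrib)
qed

lemma fib_paths_eq_sum_atMost:
  "fib_paths n c s = (\<Sum>k\<le>c. int ((c - k) choose k) * paths_to_zero n (2 * int c - 3 * int k + s))"
proof (induction n c s rule: fib_paths.induct)
  case (3 n c s)
  let ?X = "\<lambda>k. paths_to_zero n (2 * int (Suc (Suc c)) - 3 * int k + s)"
  have "fib_paths n (Suc c) (s+2) = (\<Sum>k\<le>Suc c. int ((Suc c - k) choose k) * ?X k)"
    using "3.IH"(1) by (simp add: algebra_simps)
  moreover have "fib_paths n c (s+1) = (\<Sum>k\<le>c. int ((c - k) choose k) * ?X (Suc k))"
    using "3.IH"(2) by (simp add: algebra_simps)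
  ultimately show ?case using sum_choose_diff_Suc_Suc[of c ?X] by simp
qed (simp_all add: algebra_simps)

lemma fib_paths_eq_sum:
  "fib_paths n c s =
    (\<Sum>k\<in>{0..c div 2}. int ((c - k) choose k) * paths_to_zero n (2 * int c - 3 * int k + s))"
  unfolding fib_paths_eq_sum_atMost
  by (rule sum.mono_neutral_right) auto

lemma level_snoc: "level (ss @ [x]) = level ss + step_val x"
  by (simp add: level_def)

lemma rev_partial_ternary_snoc:
  "rev_partial_ternary (ss @ [x]) \<longleftrightarrow> rev_partial_ternary ss \<and> level (ss @ [x]) \<ge> 0"
  unfolding rev_partial_ternary_def by (auto simp: le_Suc_eq)

lemma rpt_paths_neg: "c < 0 \<Longrightarrow> rpt_paths n c = {}"
  unfolding rpt_paths_def rev_partial_ternary_def by auto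

lemma rpt_paths_0: "rpt_paths 0 c = (if c = 0 then {[]} else {})"
  unfolding rpt_paths_def rev_partial_ternary_def by (auto simp: level_def)

lemma finite_rpt_paths: "finite (rpt_paths n c)"
proof (rule finite_subset)
  show "rpt_paths n c \<subseteq> {xs. set xs \<subseteq> UNIV \<and> length xs = n}"
    unfolding rpt_paths_def by auto
qed (rule finite_lists_length_eq, simp)

lemma rpt_paths_Suc:
  assumes "c \<ge> 0"
  shows "rpt_paths (Suc n) c =
    (\<lambda>ss. ss @ [True]) ` rpt_paths n (c-2) \<union> (\<lambda>ss. ss @ [False]) ` rpt_paths n (c+1)"
proof (intro equalityI subsetI)
  fix ss assume ss: "ss \<in> rpt_paths (Suc n) c"
  then have "ss \<noteq> []" unfolding rpt_paths_def by auto
  then obtain ys x where ys: "ss = ys @ [x]" by (metis rev_exhaust)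
  have "length ys = n" "rev_partial_ternary ys" "level ys + step_val x = c"
    using ss unfolding ys rpt_paths_def by (auto simp: rev_partial_ternary_snoc level_snoc)
  then show "ss \<in> (\<lambda>ss. ss @ [True]) ` rpt_paths n (c-2) \<union> (\<lambda>ss. ss @ [False]) ` rpt_paths n (c+1)"
    unfolding ys rpt_paths_def by (cases x) (auto simp: step_val_def)
next
  fix ss
  assume "ss \<in> (\<lambda>ss. ss @ [True]) ` rpt_paths n (c-2) \<union> (\<lambda>ss. ss @ [False]) ` rpt_paths n (c+1)"
  then show "ss \<in> rpt_paths (Suc n) c"
    using assms unfolding rpt_paths_def
    by (auto simp: rev_partial_ternary_snoc level_snoc step_val_def)
qed

lemma card_rpt_paths_Suc:
  assumes "c \<ge> 0"
  shows "card (rpt_paths (Suc n) c) = card (rpt_paths n (c-2)) + card (rpt_paths n (c+1))"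
proof -
  have card_snoc: "card ((\<lambda>ss. ss @ [x]) ` A) = card A" for x :: bool and A
    by (rule card_image) (simp add: inj_on_def)
  show ?thesis
    unfolding rpt_paths_Suc[OF assms]
    by (subst card_Un_disjoint) (auto simp: finite_rpt_paths card_snoc)
qed

lemma card_rpt_paths_eq_fib_paths: "int (card (rpt_paths n (int c))) = fib_paths n c 0"
proof (induction n arbitrary: c)
  case 0
  have "fib_paths 0 c 0 = 0" if "c \<noteq> 0"
    unfolding fib_paths_eq_sum using that by (intro sum.neutral) auto
  then show ?case by (cases "c = 0") (auto simp: rpt_paths_0)
next
  case (Suc n)
  have "int (card (rpt_paths n (int c - 2))) = (if c \<ge> 2 then fib_paths n (c-2) 0 else 0)"
    using Suc.IH[of "c-2"] by (auto simp: rpt_paths_neg of_nat_diff)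
  moreover have "int (card (rpt_paths n (int c + 1))) = fib_paths n (Suc c) 0"
    using Suc.IH[of "Suc c"] by (simp add: add.commute)
  ultimately show ?case
    using card_rpt_paths_Suc[of "int c" n] fib_paths_Suc_zero[of n c] by simp
qed

theorem mainTheorem2:
  fixes N i :: nat
  shows "int (card (rpt_paths (3*N + 2*i) (int i))) =
    (\<Sum>k\<in>{0..i div 2}.
       int ((i - k) choose k) *
       (binom (3*N + 2*i + 1) (int N + int k) - 3 * binom (3*N + 2*i) (int N + int k - 1)))"
proof -
  let ?n = "3*N + 2*i"
  have "int (card (rpt_paths ?n (int i))) =
      (\<Sum>k\<in>{0..i div 2}. int ((i - k) choose k) * paths_to_zero ?n (2 * int i - 3 * int k))"
    using card_rpt_paths_eq_fib_paths fib_paths_eq_sum by simp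
  also have "\<dots> = (\<Sum>k\<in>{0..i div 2}.
       int ((i - k) choose k) *
       (binom (3*N + 2*i + 1) (int N + int k) - 3 * binom (3*N + 2*i) (int N + int k - 1)))"
  proof (rule sum.cong[OF refl])
    fix k assume "k \<in> {0..i div 2}"
    then have "paths_to_zero ?n (2 * int i - 3 * int k) =
        binom ?n (int N + int k) - 2 * binom ?n (int N + int k - 1)"
      by (intro paths_to_zero_closed_form) auto
    then show "int ((i - k) choose k) * paths_to_zero ?n (2 * int i - 3 * int k) =
       int ((i - k) choose k) *
       (binom (3*N + 2*i + 1) (int N + int k) - 3 * binom (3*N + 2*i) (int N + int k - 1))"
      using binom_Suc[of ?n "int N + int k"] by simp
  qed
  finally show ?thesis .
qed

end
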